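(* Let $P(s)=\sum_{n=1}^Na_nn^{-s}$ ($N\in\mathbb{N}$) be a Dirichlet polynomial with real coefficients and $a_1>0$, and let $\rho$ be a completely multiplicative arithmetical function with $\rho^2=\rho$. If $P$ has no zeros in $\mathbb{C}_0=\{\mathrm{Re}\,s>0\}$, then $\sum_{n=1}^Na_n\rho(n)\ge0$; in particular $P(0)\ge0$. If in addition $P(0)>0$, then $\sum_{n=1}^Na_n\rho(n)>0$.
   Context: A completely multiplicative arithmetical function satisfies $\rho(1)=1$ and $\rho(mn)=\rho(m)\rho(n)$ for all $m,n\ge1$; $\rho^2=\rho$ means $\rho$ takes values in $\{0,1\}$. *)

theory Defs
  imports "HOL-Analysis.Analysis"
begin

definition dirichlet_poly :: "nat \<Rightarrow> (nat \<Rightarrow> real) \<Rightarrow> complex \<Rightarrow> complex" where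
  "dirichlet_poly N a s = (\<Sum>n=1..N. complex_of_real (a n) * (of_nat n) powr (- s))"

definition completely_multiplicative :: "(nat \<Rightarrow> real) \<Rightarrow> bool" where
  "completely_multiplicative \<rho> \<longleftrightarrow> \<rho> 1 = 1 \<and> (\<forall>m n. m \<ge> 1 \<longrightarrow> n \<ge> 1 \<longrightarrow> \<rho> (m * n) = \<rho> m * \<rho> n)"

end

theory Submission
  imports Defs "HOL-Complex_Analysis.Complex_Analysis" "HOL-Computational_Algebra.Primes"
begin

text \<open>
  Let \<open>\<Omega>\<^sub>S(n)\<close> count the prime factors of \<open>n\<close>, with multiplicity, that lie outside
  \<open>S = {p. \<rho> p = 1}\<close>, and \<open>P\<^sub>z(s) = \<Sum>\<^sub>n a\<^sub>n z\<^bsup>\<Omega>\<^sub>S(n)\<^esup> n\<^bsup>-s\<^esup>\<close>. Then \<open>P\<^sub>1 = P\<close>, and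
  \<open>P\<^sub>0(s) = \<Sum>\<^sub>n a\<^sub>n \<rho>(n) n\<^bsup>-s\<^esup>\<close> because an idempotent completely multiplicative \<open>\<rho>\<close> is the
  indicator of the integers all of whose prime factors lie in \<open>S\<close>.

  The numbers \<open>log p\<close> are linearly independent over \<open>\<rat>\<close>, so by Kronecker's theorem the
  vertical translates \<open>P(s + iT)\<close> approximate \<open>P\<^sub>z(s)\<close> uniformly on \<open>Re s > 0\<close> for every
  \<open>|z| = 1\<close>, and Hurwitz's theorem gives \<open>P\<^sub>z(s) \<noteq> 0\<close> there. For real \<open>\<sigma> > 0\<close> this
  extends to the closed disc \<open>|z| \<le> 1\<close>: a zero \<open>(\<sigma>, z)\<close> with maximal \<open>\<sigma>\<close> has \<open>|z| < 1\<close>,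
  and Hurwitz's theorem in \<open>z\<close> applied to the zero-free \<open>z \<mapsto> P\<^sub>z(\<sigma> + 1/m)\<close> excludes it.
  Hence, for real \<open>|x| \<le> 1\<close>, \<open>\<sigma> \<mapsto> P\<^sub>x(\<sigma>)\<close> is real, zero-free on \<open>(0, \<infinity>)\<close> and close
  to \<open>a\<^sub>1 > 0\<close> for large \<open>\<sigma>\<close>, so \<open>P\<^sub>x(0) \<ge> 0\<close>; if \<open>P(0) > 0\<close>, the same Hurwitz argument
  at \<open>\<sigma> = 0\<close> makes \<open>P\<^sub>x(0)\<close> nonzero for \<open>|x| < 1\<close>.
\<close>

lemma inj_on_ln_of_nat: "inj_on (\<lambda>n::nat. ln (real n)) {0<..}"
  by (intro inj_onI) simp

lemma ln_eq_sum_prime_factors: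
  assumes "n > 0"
  shows "ln (real n) = (\<Sum>p\<in>prime_factors n. real (multiplicity p n) * ln (real p))"
proof -
  have "real n = real (\<Prod>p\<in>prime_factors n. p ^ multiplicity p n)"
    using prime_factorization_nat[OF assms] by (rule arg_cong)
  also have "\<dots> = (\<Prod>p\<in>prime_factors n. real p ^ multiplicity p n)"
    by simp
  also have "ln \<dots> = (\<Sum>p\<in>prime_factors n. real (multiplicity p n) * ln (real p))"
    by (subst ln_prod) (auto simp: ln_realpow in_prime_factors_imp_prime prime_gt_0_nat)
  finally show ?thesis .
qed

lemma int_combination_ln_primes_eq_0:
  fixes e :: "nat \<Rightarrow> int"
  assumes "finite T" "\<And>p. p \<in> T \<Longrightarrow> prime p"
    and "(\<Sum>p\<in>T. of_int (e p) * ln (real p)) = 0" and "q \<in> T"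
  shows "e q = 0"
proof -
  define A where "A = (\<Prod>p\<in>T. p ^ nat (e p))"
  define B where "B = (\<Prod>p\<in>T. p ^ nat (- e p))"
  have ln_prod_powers: "ln (real (\<Prod>p\<in>T. p ^ k p)) = (\<Sum>p\<in>T. real (k p) * ln (real p))" for k
    unfolding of_nat_prod
    by (subst ln_prod) (use assms(1,2) prime_gt_0_nat in \<open>auto simp: ln_realpow\<close>)
  have "ln (real A) - ln (real B) = (\<Sum>p\<in>T. of_int (e p) * ln (real p))"
    unfolding A_def B_def ln_prod_powers sum_subtractf[symmetric]
    by (intro sum.cong refl) (simp add: left_diff_distrib[symmetric], linarith)
  then have "ln (real A) = ln (real B)" using assms(3) by simp
  moreover have "A > 0" "B > 0"
    unfolding A_def B_def using assms(2) prime_gt_0_nat by (auto intro!: prod_pos)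
  ultimately have "A = B" by simp
  moreover have "multiplicity q A = nat (e q)" "multiplicity q B = nat (- e q)"
    unfolding A_def B_def
    by (subst multiplicity_prod_prime_powers; use assms(1,2,4) in simp)+
  ultimately show ?thesis by simp
qed

lemma independent_ln_primes:
  assumes "\<And>p. p \<in> P \<Longrightarrow> prime (p::nat)"
  shows "module.independent (\<lambda>r. (*) (real_of_int r)) ((\<lambda>p. ln (real p)) ` P)"
proof -
  interpret Modules.module "\<lambda>r. (*) (real_of_int r)"
    by (simp add: Modules.module.intro distrib_left mult.commute)
  show ?thesis
    unfolding independent_explicit_module
  proof (intro allI impI)
    fix t u v
    assume t: "finite t" "t \<subseteq> (\<lambda>p. ln (real p)) ` P"
      and zero: "(\<Sum>v\<in>t. of_int (u v) * v) = 0" and "v \<in> t"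
    obtain T where T: "T \<subseteq> P" "t = (\<lambda>p. ln (real p)) ` T"
      using t(2) by (auto simp: subset_image_iff)
    have inj: "inj_on (\<lambda>p. ln (real p)) T"
      using inj_on_subset[OF inj_on_ln_of_nat] T(1) assms prime_gt_0_nat by blast
    obtain q where "q \<in> T" "v = ln (real q)" using \<open>v \<in> t\<close> T(2) by auto
    moreover have "finite T" using t(1) T(2) inj finite_image_iff by blast
    moreover have "(\<Sum>p\<in>T. of_int (u (ln (real p))) * ln (real p)) = 0"
      using zero unfolding T(2) by (simp add: sum.reindex[OF inj])
    ultimately show "u v = 0"
      using int_combination_ln_primes_eq_0[of T "\<lambda>p. u (ln (real p))"] T(1) assms by blast
  qed
qed

lemma Kronecker_approx_ln_primes:
  assumes "finite P" "\<And>p. p \<in> P \<Longrightarrow> prime (p::nat)" "\<epsilon> > 0"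
  obtains t where "\<And>p. p \<in> P \<Longrightarrow> \<exists>h::int. \<bar>t * ln (real p) - h - \<alpha> p\<bar> < \<epsilon>"
proof -
  obtain enum where enum: "bij_betw enum {..<card P} P"
    using ex_bij_betw_nat_finite[OF assms(1)] by (auto simp: atLeast0LessThan)
  define \<theta> where "\<theta> = (\<lambda>p. ln (real p)) \<circ> enum"
  have inj_ln: "inj_on (\<lambda>p. ln (real p)) P"
    using inj_on_subset[OF inj_on_ln_of_nat] assms(2) prime_gt_0_nat by blast
  have "inj_on \<theta> {..<card P}"
    unfolding \<theta>_def using enum inj_ln by (simp add: bij_betw_def comp_inj_on)
  moreover have "module.independent (\<lambda>r. (*) (real_of_int r)) (\<theta> ` {..<card P})"
    unfolding \<theta>_def image_comp[symmetric] bij_betw_imp_surj_on[OF enum]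
    using independent_ln_primes assms(2) by blast
  ultimately obtain t h where
    th: "\<And>i. i < card P \<Longrightarrow> \<bar>t * \<theta> i - of_int (h i) - \<alpha> (enum i)\<bar> < \<epsilon>"
    using Kronecker_thm_1[of \<theta> "card P" \<epsilon> "\<alpha> \<circ> enum"] assms(3) by auto
  show ?thesis
  proof (rule that)
    fix p assume "p \<in> P"
    then obtain i where "i < card P" "p = enum i"
      using enum by (auto simp: bij_betw_def)
    then show "\<exists>h::int. \<bar>t * ln (real p) - h - \<alpha> p\<bar> < \<epsilon>"
      using th[of i] unfolding \<theta>_def by auto
  qed
qed

lemma cis_ln_primes_tendsto:
  assumes "finite P" "\<And>p. p \<in> P \<Longrightarrow> prime (p::nat)" "\<And>p. p \<in> P \<Longrightarrow> norm (w p) = 1"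
  obtains T :: "nat \<Rightarrow> real" where "\<And>p. p \<in> P \<Longrightarrow> (\<lambda>m. cis (T m * ln (real p))) \<longlonglongrightarrow> w p"
proof -
  define \<alpha> where "\<alpha> p = Arg (w p) / (2 * pi)" for p
  have "\<exists>t. \<forall>p\<in>P. \<exists>h::int. \<bar>t * ln (real p) - h - \<alpha> p\<bar> < 1 / Suc m" for m
  proof -
    obtain t where "\<And>p. p \<in> P \<Longrightarrow> \<exists>h::int. \<bar>t * ln (real p) - h - \<alpha> p\<bar> < 1 / Suc m"
      using Kronecker_approx_ln_primes[OF assms(1,2), of "1 / Suc m" \<alpha>] by auto
    then show ?thesis by blast
  qed
  then obtain t where t: "\<And>m p. p \<in> P \<Longrightarrow> \<exists>h::int. \<bar>t m * ln (real p) - h - \<alpha> p\<bar> < 1 / Suc m"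
    by metis
  show ?thesis
  proof (rule that)
    fix p assume p: "p \<in> P"
    obtain h :: "nat \<Rightarrow> int" where h: "\<And>m. \<bar>t m * ln (real p) - h m - \<alpha> p\<bar> < 1 / Suc m"
      using t[OF p] by metis
    define \<delta> where "\<delta> m = t m * ln (real p) - h m - \<alpha> p" for m
    have "\<delta> \<longlonglongrightarrow> 0"
    proof (rule Lim_null_comparison)
      show "\<forall>\<^sub>F m in sequentially. norm (\<delta> m) \<le> 1 / Suc m"
        using h by (auto simp: \<delta>_def less_imp_le)
    qed (rule LIMSEQ_inverse_real_of_nat[unfolded inverse_eq_divide])
    moreover have "cis (2 * pi * t m * ln (real p)) = w p * cis (2 * pi * \<delta> m)" for m
    proof -
      have "2 * pi * t m * ln (real p) = 2 * pi * h m + Arg (w p) + 2 * pi * \<delta> m"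
        by (simp add: \<delta>_def \<alpha>_def algebra_simps)
      moreover have "cis (Arg (w p)) = w p"
        using cis_Arg[of "w p"] assms(3)[OF p] by (cases "w p = 0") (auto simp: sgn_div_norm)
      ultimately show ?thesis by (simp add: cis_mult[symmetric])
    qed
    ultimately show "(\<lambda>m. cis (2 * pi * t m * ln (real p))) \<longlonglongrightarrow> w p"
      using tendsto_mult_left[OF tendsto_cis[of "\<lambda>m. 2 * pi * \<delta> m"], of 0 sequentially "w p"]
      by (simp add: tendsto_mult_right_zero)
  qed
qed

lemma cis_sum: "cis (\<Sum>x\<in>A. f x) = (\<Prod>x\<in>A. cis (f x))"
  by (induction A rule: infinite_finite_induct) (simp_all add: cis_mult[symmetric])

definition num_prime_factors_outside :: "nat set \<Rightarrow> nat \<Rightarrow> nat" where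
  "num_prime_factors_outside S n = (\<Sum>p\<in>prime_factors n - S. multiplicity p n)"

lemma power_num_prime_factors_outside:
  "z ^ num_prime_factors_outside S n =
     (\<Prod>p\<in>prime_factors n. (if p \<in> S then 1 else z) ^ multiplicity p n)"
  unfolding num_prime_factors_outside_def power_sum
  by (rule prod.mono_neutral_cong_left) auto

lemma cis_ln_tendsto_power_num_prime_factors_outside:
  assumes "finite A" "0 \<notin> A" "norm z = 1"
  obtains T :: "nat \<Rightarrow> real"
  where "\<And>n. n \<in> A \<Longrightarrow> (\<lambda>m. cis (T m * ln (real n))) \<longlonglongrightarrow> z ^ num_prime_factors_outside S n"
proof -
  define P where "P = (\<Union>n\<in>A. prime_factors n)"
  define w where "w p = (if p \<in> S then 1 else z)" for p
  have "finite P" "\<And>p. p \<in> P \<Longrightarrow> prime p"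
    using assms(1) by (auto simp: P_def in_prime_factors_iff)
  moreover have "\<And>p. norm (w p) = 1" using assms(3) by (simp add: w_def)
  ultimately obtain T where T: "\<And>p. p \<in> P \<Longrightarrow> (\<lambda>m. cis (T m * ln (real p))) \<longlonglongrightarrow> w p"
    using cis_ln_primes_tendsto[of P w] by blast
  show ?thesis
  proof (rule that)
    fix n assume "n \<in> A"
    then have "n > 0" "prime_factors n \<subseteq> P" using assms(2) P_def by (auto intro: Nat.gr0I)
    have "cis (T m * ln (real n)) =
        (\<Prod>p\<in>prime_factors n. cis (T m * ln (real p)) ^ multiplicity p n)" for m
      unfolding ln_eq_sum_prime_factors[OF \<open>n > 0\<close>] sum_distrib_left cis_sum
      by (intro prod.cong refl) (simp add: Complex.DeMoivre mult_ac)
    moreover have "(\<lambda>m. \<Prod>p\<in>prime_factors n. cis (T m * ln (real p)) ^ multiplicity p n)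
        \<longlonglongrightarrow> (\<Prod>p\<in>prime_factors n. w p ^ multiplicity p n)"
      using T \<open>prime_factors n \<subseteq> P\<close> by (intro tendsto_prod tendsto_power) auto
    ultimately show "(\<lambda>m. cis (T m * ln (real n))) \<longlonglongrightarrow> z ^ num_prime_factors_outside S n"
      by (simp add: power_num_prime_factors_outside w_def)
  qed
qed

lemma completely_multiplicative_power:
  assumes "completely_multiplicative \<rho>" "p \<ge> 1"
  shows "\<rho> (p ^ k) = \<rho> p ^ k"
proof (induction k)
  case 0
  then show ?case using assms(1) by (simp add: completely_multiplicative_def)
next
  case (Suc k)
  have "\<rho> (p * p ^ k) = \<rho> p * \<rho> (p ^ k)"
    using assms unfolding completely_multiplicative_def by simp
  then show ?case using Suc by simp
qed

lemma completely_multiplicative_prod: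
  assumes "completely_multiplicative \<rho>" "finite A" "\<And>x. x \<in> A \<Longrightarrow> f x \<ge> 1"
  shows "\<rho> (\<Prod>x\<in>A. f x) = (\<Prod>x\<in>A. \<rho> (f x))"
  using assms(2,3)
proof (induction A rule: finite_induct)
  case empty
  then show ?case using assms(1) by (simp add: completely_multiplicative_def)
next
  case (insert x A)
  have "(\<Prod>x\<in>A. f x) \<ge> 1" using insert.prems by (intro prod_ge_1) simp
  then have "\<rho> (f x * (\<Prod>x\<in>A. f x)) = \<rho> (f x) * \<rho> (\<Prod>x\<in>A. f x)"
    using assms(1) insert.prems unfolding completely_multiplicative_def by simp
  then show ?case using insert by simp
qed

lemma idempotent_completely_multiplicative_eq_zero_power:
  assumes "completely_multiplicative \<rho>" "\<forall>n\<ge>1. \<rho> n * \<rho> n = \<rho> n" "n \<ge> 1"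
  shows "\<rho> n = 0 ^ num_prime_factors_outside {p. \<rho> p = 1} n"
proof -
  have pos: "p \<ge> 1" if "p \<in> prime_factors n" for p
    using that by (auto simp: in_prime_factors_iff Suc_le_eq prime_gt_0_nat)
  have "\<rho> n = \<rho> (\<Prod>p\<in>prime_factors n. p ^ multiplicity p n)"
    using assms(3) by (intro arg_cong[where f = \<rho>] prime_factorization_nat) simp
  also have "\<dots> = (\<Prod>p\<in>prime_factors n. \<rho> p ^ multiplicity p n)"
    using pos by (simp add: completely_multiplicative_prod completely_multiplicative_power assms(1))
  also have "\<dots> = (\<Prod>p\<in>prime_factors n. (if \<rho> p = 1 then 1 else 0) ^ multiplicity p n)"
  proof (intro prod.cong refl)
    fix p assume "p \<in> prime_factors n"
    then have "\<rho> p * \<rho> p = \<rho> p" using pos assms(2) by simp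
    then have "\<rho> p = 0 \<or> \<rho> p = 1" by (metis mult_cancel_right1)
    then show "\<rho> p ^ multiplicity p n = (if \<rho> p = 1 then 1 else 0) ^ multiplicity p n"
      by auto
  qed
  finally show ?thesis by (simp add: power_num_prime_factors_outside)
qed

lemma nonneg_if_no_zeros_between:
  fixes f :: "real \<Rightarrow> real"
  assumes "x \<le> b" "continuous_on {x..b} f" "\<And>y. x < y \<Longrightarrow> y \<le> b \<Longrightarrow> f y \<noteq> 0" "f b > 0"
  shows "f x \<ge> 0"
proof (rule ccontr)
  assume "\<not> f x \<ge> 0"
  then obtain y where "x \<le> y" "y \<le> b" "f y = 0"
    using IVT'[of f x 0 b] assms(1,2,4) by force
  then show False
    using assms(3)[of y] \<open>\<not> f x \<ge> 0\<close> by (cases "y = x") auto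
qed

lemma maximal_zero_exists:
  fixes h :: "real \<Rightarrow> 'a::metric_space \<Rightarrow> 'b::real_normed_vector"
  assumes "continuous_on ({\<sigma>..\<sigma>\<^sub>0} \<times> K) (\<lambda>(\<tau>, w). h \<tau> w)" "compact K" "z \<in> K" "h \<sigma> z = 0"
    and "\<And>\<tau> w. \<tau> \<ge> \<sigma>\<^sub>0 \<Longrightarrow> w \<in> K \<Longrightarrow> h \<tau> w \<noteq> 0"
  obtains \<sigma>\<^sub>1 z\<^sub>1 where "\<sigma> \<le> \<sigma>\<^sub>1" "z\<^sub>1 \<in> K" "h \<sigma>\<^sub>1 z\<^sub>1 = 0"
    "\<And>\<tau> w. \<sigma>\<^sub>1 < \<tau> \<Longrightarrow> w \<in> K \<Longrightarrow> h \<tau> w \<noteq> 0"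
proof -
  define Z where "Z = {x \<in> {\<sigma>..\<sigma>\<^sub>0} \<times> K. (\<lambda>(\<tau>, w). h \<tau> w) x = 0}"
  have "compact ({\<sigma>..\<sigma>\<^sub>0} \<times> K)" using assms(2) by (intro compact_Times compact_Icc)
  moreover have "closed Z"
    unfolding Z_def using assms(1) compact_imp_closed[OF calculation]
    by (rule continuous_closed_preimage_constant)
  moreover have "Z \<subseteq> {\<sigma>..\<sigma>\<^sub>0} \<times> K" by (auto simp: Z_def)
  ultimately have "compact Z" by (metis compact_Int_closed inf.absorb2)
  then have "compact (fst ` Z)" by (intro compact_continuous_image continuous_intros)
  moreover have "(\<sigma>, z) \<in> Z"
  proof -
    have "\<not> \<sigma>\<^sub>0 \<le> \<sigma>" using assms(3-5) by blast
    then show ?thesis using assms(3,4) by (simp add: Z_def)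
  qed
  ultimately obtain \<sigma>\<^sub>1 where "\<sigma>\<^sub>1 \<in> fst ` Z" and max: "\<And>\<tau>. \<tau> \<in> fst ` Z \<Longrightarrow> \<tau> \<le> \<sigma>\<^sub>1"
    using compact_attains_sup[of "fst ` Z"] by blast
  then obtain z\<^sub>1 where "(\<sigma>\<^sub>1, z\<^sub>1) \<in> Z" by force
  show ?thesis
  proof (rule that)
    show "\<sigma> \<le> \<sigma>\<^sub>1" "z\<^sub>1 \<in> K" "h \<sigma>\<^sub>1 z\<^sub>1 = 0" using \<open>(\<sigma>\<^sub>1, z\<^sub>1) \<in> Z\<close> by (auto simp: Z_def)
    show "h \<tau> w \<noteq> 0" if "\<sigma>\<^sub>1 < \<tau>" "w \<in> K" for \<tau> w
      using that assms(5)[of \<tau> w] max[of \<tau>] \<open>\<sigma> \<le> \<sigma>\<^sub>1\<close>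
      by (force simp: Z_def not_le)
  qed
qed

lemma uniform_limit_sum_tendsto_coeffs:
  fixes c :: "nat \<Rightarrow> 'i \<Rightarrow> 'b::real_normed_algebra"
  assumes "finite I" "\<And>i. i \<in> I \<Longrightarrow> (\<lambda>m. c m i) \<longlonglongrightarrow> d i"
    and "\<And>i. i \<in> I \<Longrightarrow> bounded (\<phi> i ` K)"
  shows "uniform_limit K (\<lambda>m x. \<Sum>i\<in>I. c m i * \<phi> i x) (\<lambda>x. \<Sum>i\<in>I. d i * \<phi> i x) sequentially"
  using assms
proof (induction I rule: finite_induct)
  case empty
  show ?case by (simp add: uniform_limit_const)
next
  case (insert i I)
  have "uniform_limit K (\<lambda>m _. c m i) (\<lambda>_. d i) sequentially"
    using tendstoD[OF insert.prems(1)[of i]] by (auto intro!: uniform_limitI elim!: eventually_mono)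
  then have "uniform_limit K (\<lambda>m x. c m i * \<phi> i x) (\<lambda>x. d i * \<phi> i x) sequentially"
    using insert.prems(2)[of i] finite_imp_bounded[of "(\<lambda>_. d i) ` K"]
    by (intro uniform_lim_mult uniform_limit_const) (auto simp: image_constant_conv)
  with insert show ?case by (simp add: uniform_limit_add)
qed

definition twisted_dirichlet_poly ::
    "nat \<Rightarrow> (nat \<Rightarrow> real) \<Rightarrow> nat set \<Rightarrow> complex \<Rightarrow> complex \<Rightarrow> complex" where
  "twisted_dirichlet_poly N a S s z =
     (\<Sum>n=1..N. of_real (a n) * exp (- s * of_real (ln (real n))) * z ^ num_prime_factors_outside S n)"

lemma twisted_dirichlet_poly_1: "twisted_dirichlet_poly N a S s 1 = dirichlet_poly N a s"
  unfolding twisted_dirichlet_poly_def dirichlet_poly_def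
  by (intro sum.cong refl) (auto simp: powr_def)

lemma twisted_dirichlet_poly_of_real:
  "twisted_dirichlet_poly N a S (of_real \<sigma>) (of_real x) =
     of_real (\<Sum>n=1..N. a n * exp (- \<sigma> * ln (real n)) * x ^ num_prime_factors_outside S n)"
  unfolding twisted_dirichlet_poly_def of_real_sum
  by (intro sum.cong refl) (simp flip: exp_of_real)

lemma holomorphic_twisted_dirichlet_poly_in_z: "twisted_dirichlet_poly N a S s holomorphic_on A"
  unfolding twisted_dirichlet_poly_def by (intro holomorphic_intros)

lemma holomorphic_twisted_dirichlet_poly_in_s: "(\<lambda>s. twisted_dirichlet_poly N a S s z) holomorphic_on A"
  unfolding twisted_dirichlet_poly_def by (intro holomorphic_intros)

lemma continuous_on_twisted_dirichlet_poly_real: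
  "continuous_on A (\<lambda>(t, z). twisted_dirichlet_poly N a S (of_real t) z)"
  unfolding twisted_dirichlet_poly_def case_prod_unfold by (intro continuous_intros)

lemma twisted_dirichlet_poly_near_leading_coeff:
  assumes "N \<ge> 1" "a 1 > 0"
  obtains \<sigma>\<^sub>0 where "\<sigma>\<^sub>0 > 0"
    "\<And>s z. Re s \<ge> \<sigma>\<^sub>0 \<Longrightarrow> norm z \<le> 1 \<Longrightarrow> norm (twisted_dirichlet_poly N a S s z - a 1) < a 1"
proof -
  define C where "C = (\<Sum>n=2..N. \<bar>a n\<bar>)"
  define \<sigma>\<^sub>0 where "\<sigma>\<^sub>0 = C / (a 1 * ln 2) + 1"
  have "C \<ge> 0" unfolding C_def by (intro sum_nonneg) auto
  then have "\<sigma>\<^sub>0 > 0" unfolding \<sigma>\<^sub>0_def using assms(2) by (simp add: add_nonneg_pos)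
  have "C < a 1 * (\<sigma>\<^sub>0 * ln 2)"
    using assms(2) \<open>C \<ge> 0\<close> unfolding \<sigma>\<^sub>0_def by (simp add: field_simps)
  also have "\<dots> \<le> a 1 * exp (\<sigma>\<^sub>0 * ln 2)"
    using assms(2) by (intro mult_left_mono) (auto intro: order_trans[OF _ exp_ge_add_one_self])
  finally have small: "C * exp (- \<sigma>\<^sub>0 * ln 2) < a 1"
    by (simp add: exp_minus field_simps)
  show ?thesis
  proof (rule that[OF \<open>\<sigma>\<^sub>0 > 0\<close>])
    fix s and z :: complex assume s: "Re s \<ge> \<sigma>\<^sub>0" and z: "norm z \<le> 1"
    have "twisted_dirichlet_poly N a S s z - a 1 =
        (\<Sum>n=2..N. of_real (a n) * exp (- s * of_real (ln (real n))) * z ^ num_prime_factors_outside S n)"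
      using assms(1) unfolding twisted_dirichlet_poly_def
      by (simp add: sum.atLeast_Suc_atMost numeral_2_eq_2 num_prime_factors_outside_def)
    also have "norm \<dots> \<le> (\<Sum>n=2..N. \<bar>a n\<bar> * exp (- \<sigma>\<^sub>0 * ln 2))"
    proof (intro order_trans[OF norm_sum] sum_mono)
      fix n assume "n \<in> {2..N}"
      then have "\<sigma>\<^sub>0 * ln 2 \<le> Re s * ln (real n)"
        using s \<open>\<sigma>\<^sub>0 > 0\<close> by (intro mult_mono) auto
      then have "\<bar>a n\<bar> * exp (- (Re s * ln (real n))) * norm z ^ num_prime_factors_outside S n
          \<le> \<bar>a n\<bar> * exp (- \<sigma>\<^sub>0 * ln 2) * 1"
        using z by (intro mult_mono mult_left_mono power_le_one) auto
      then show "norm (of_real (a n) * exp (- s * of_real (ln (real n))) * z ^ num_prime_factors_outside S n)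
          \<le> \<bar>a n\<bar> * exp (- \<sigma>\<^sub>0 * ln 2)"
        by (simp add: norm_mult norm_power)
    qed
    also have "\<dots> = C * exp (- \<sigma>\<^sub>0 * ln 2)" unfolding C_def by (simp add: sum_distrib_right)
    finally show "norm (twisted_dirichlet_poly N a S s z - a 1) < a 1" using small by simp
  qed
qed

lemma twisted_dirichlet_poly_limit_nonzero:
  assumes "ss \<longlonglongrightarrow> s"
    and "\<And>m w. norm w < 1 \<Longrightarrow> twisted_dirichlet_poly N a S (ss m) w \<noteq> 0"
    and "twisted_dirichlet_poly N a S s 1 \<noteq> twisted_dirichlet_poly N a S s w" "norm w < 1"
  shows "twisted_dirichlet_poly N a S s w \<noteq> 0"
proof -
  let ?H = "twisted_dirichlet_poly N a S"
  have "(\<lambda>z. z ^ num_prime_factors_outside S n) ` cball 0 1 \<subseteq> (cball 0 1 :: complex set)" for n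
    by (auto simp: norm_power power_le_one)
  then have unif: "uniform_limit (cball 0 1) (\<lambda>m. ?H (ss m)) (?H s) sequentially"
    unfolding twisted_dirichlet_poly_def
    by (intro uniform_limit_sum_tendsto_coeffs tendsto_intros assms(1))
       (auto intro: bounded_subset[OF bounded_cball])
  have nonconst: "\<not> ?H s constant_on ball 0 1"
  proof
    assume "?H s constant_on ball 0 1"
    then have "?H s constant_on cball 0 1"
      using constant_on_closureI[of "?H s" "ball 0 1"]
        holomorphic_on_imp_continuous_on[OF holomorphic_twisted_dirichlet_poly_in_z]
      by simp
    then show False
      using assms(3,4) unfolding constant_on_def by (metis mem_cball_0 norm_one order.refl less_imp_le)
  qed
  show ?thesis
  proof (rule Hurwitz_no_zeros[of "ball 0 1" "\<lambda>m. ?H (ss m)" "?H s"])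
    show "uniform_limit K (\<lambda>m. ?H (ss m)) (?H s) sequentially" if "K \<subseteq> ball 0 1" for K
      using unif by (rule uniform_limit_on_subset) (use that ball_subset_cball in blast)
  qed (use nonconst assms(2,4) holomorphic_twisted_dirichlet_poly_in_z in auto)
qed

locale zero_free_dirichlet_poly =
  fixes N :: nat and a :: "nat \<Rightarrow> real"
  assumes N_pos: "N \<ge> 1" and a1_pos: "a 1 > 0"
    and no_zeros: "\<forall>s. Re s > 0 \<longrightarrow> dirichlet_poly N a s \<noteq> 0"
begin

lemmas near_leading_coeff = twisted_dirichlet_poly_near_leading_coeff[where a = a, OF N_pos a1_pos]

lemma twisted_dirichlet_poly_nonzero_on_circle:
  assumes "Re s > 0" "norm z = 1"
  shows "twisted_dirichlet_poly N a S s z \<noteq> 0"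
proof -
  define Hp where "Hp = {s. Re s > 0}"
  define g where "g s = twisted_dirichlet_poly N a S s z" for s
  obtain T where T: "\<And>n. n \<in> {1..N} \<Longrightarrow>
      (\<lambda>m. cis (T m * ln (real n))) \<longlonglongrightarrow> z ^ num_prime_factors_outside S n"
    using cis_ln_tendsto_power_num_prime_factors_outside[of "{1..N}" z S] assms(2) by auto
  define F where
    "F m s = (\<Sum>n=1..N. cis (T m * ln (real n)) * (of_real (a n) * exp (- s * of_real (ln (real n)))))"
    for m s
  have F_shift: "F m s = dirichlet_poly N a (s - \<i> * of_real (T m))" for m s
    unfolding F_def twisted_dirichlet_poly_1[where S = S, symmetric] twisted_dirichlet_poly_def
    by (intro sum.cong refl) (simp add: cis_conv_exp exp_add[symmetric] algebra_simps)
  have "bounded ((\<lambda>s. of_real (a n) * exp (- s * of_real (ln (real n)))) ` Hp)"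
    if "n \<in> {1..N}" for n
    unfolding bounded_iff using that
    by (intro exI[of _ "\<bar>a n\<bar>"]) (auto simp: Hp_def norm_mult intro!: mult_left_le)
  then have "uniform_limit Hp F (\<lambda>s. \<Sum>n=1..N. z ^ num_prime_factors_outside S n *
      (of_real (a n) * exp (- s * of_real (ln (real n))))) sequentially"
    unfolding F_def by (intro uniform_limit_sum_tendsto_coeffs T) auto
  then have unif: "uniform_limit Hp F g sequentially"
    unfolding g_def twisted_dirichlet_poly_def by (simp add: mult_ac)
  obtain \<sigma>\<^sub>0 where "\<sigma>\<^sub>0 > 0" and near:
      "\<And>s z. Re s \<ge> \<sigma>\<^sub>0 \<Longrightarrow> norm z \<le> 1 \<Longrightarrow> norm (twisted_dirichlet_poly N a S s z - a 1) < a 1"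
    using near_leading_coeff by blast
  have "g \<sigma>\<^sub>0 \<noteq> 0" using near[of "of_real \<sigma>\<^sub>0" z] assms(2) by (auto simp: g_def)
  show ?thesis
  proof (cases "g constant_on Hp")
    case True
    then have "g s = g \<sigma>\<^sub>0"
      using assms(1) \<open>\<sigma>\<^sub>0 > 0\<close> unfolding constant_on_def Hp_def by force
    with \<open>g \<sigma>\<^sub>0 \<noteq> 0\<close> show ?thesis by (simp add: g_def)
  next
    case False
    have "g s \<noteq> 0"
    proof (rule Hurwitz_no_zeros[of Hp F g])
      show "open Hp" unfolding Hp_def by (rule open_halfspace_Re_gt)
      show "connected Hp" unfolding Hp_def by (intro convex_connected convex_halfspace_Re_gt)
      show "F m holomorphic_on Hp" for m unfolding F_def by (intro holomorphic_intros)
      show "g holomorphic_on Hp" unfolding g_def by (rule holomorphic_twisted_dirichlet_poly_in_s)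
      show "uniform_limit K F g sequentially" if "K \<subseteq> Hp" for K
        using unif that by (rule uniform_limit_on_subset)
      show "F m w \<noteq> 0" if "w \<in> Hp" for m w using no_zeros that by (simp add: F_shift Hp_def)
    qed (use False assms(1) Hp_def in auto)
    then show ?thesis by (simp add: g_def)
  qed
qed

lemma twisted_dirichlet_poly_nonzero_on_disc:
  assumes "\<sigma> > 0" "norm z \<le> 1"
  shows "twisted_dirichlet_poly N a S (of_real \<sigma>) z \<noteq> 0"
proof
  let ?H = "twisted_dirichlet_poly N a S"
  assume zero: "?H (of_real \<sigma>) z = 0"
  obtain \<sigma>\<^sub>0 where near: "\<And>s z. Re s \<ge> \<sigma>\<^sub>0 \<Longrightarrow> norm z \<le> 1 \<Longrightarrow> norm (?H s z - a 1) < a 1"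
    using near_leading_coeff by blast
  obtain \<sigma>\<^sub>1 z\<^sub>1 where "\<sigma> \<le> \<sigma>\<^sub>1" "z\<^sub>1 \<in> cball 0 1" and zero\<^sub>1: "?H (of_real \<sigma>\<^sub>1) z\<^sub>1 = 0"
    and above: "\<And>\<tau> w. \<sigma>\<^sub>1 < \<tau> \<Longrightarrow> w \<in> cball 0 1 \<Longrightarrow> ?H (of_real \<tau>) w \<noteq> 0"
  proof (rule maximal_zero_exists[of \<sigma> \<sigma>\<^sub>0 "cball 0 1" "\<lambda>t. ?H (of_real t)" z])
    show "?H (of_real \<tau>) w \<noteq> 0" if "\<tau> \<ge> \<sigma>\<^sub>0" "w \<in> cball 0 1" for \<tau> w
      using near[of "of_real \<tau>" w] that by auto
  qed (use zero assms(2) continuous_on_twisted_dirichlet_poly_real in auto)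
  have "\<sigma>\<^sub>1 > 0" using \<open>\<sigma> \<le> \<sigma>\<^sub>1\<close> assms(1) by simp
  then have "?H (of_real \<sigma>\<^sub>1) w \<noteq> 0" if "norm w = 1" for w
    using twisted_dirichlet_poly_nonzero_on_circle that by simp
  then have "norm z\<^sub>1 \<noteq> 1" "?H (of_real \<sigma>\<^sub>1) 1 \<noteq> 0" using zero\<^sub>1 by auto
  have "?H (of_real \<sigma>\<^sub>1) z\<^sub>1 \<noteq> 0"
  proof (rule twisted_dirichlet_poly_limit_nonzero
      [where ss = "\<lambda>m. of_real (\<sigma>\<^sub>1 + inverse (Suc m))"])
    show "(\<lambda>m. of_real (\<sigma>\<^sub>1 + inverse (Suc m))) \<longlonglongrightarrow> (of_real \<sigma>\<^sub>1 :: complex)"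
      by (intro tendsto_of_real LIMSEQ_inverse_real_of_nat_add)
    show "?H (of_real (\<sigma>\<^sub>1 + inverse (Suc m))) w \<noteq> 0" if "norm w < 1" for m w
      using above[of "\<sigma>\<^sub>1 + inverse (Suc m)" w] that by simp
    show "?H (of_real \<sigma>\<^sub>1) 1 \<noteq> ?H (of_real \<sigma>\<^sub>1) z\<^sub>1"
      using \<open>?H (of_real \<sigma>\<^sub>1) 1 \<noteq> 0\<close> zero\<^sub>1 by simp
    show "norm z\<^sub>1 < 1" using \<open>norm z\<^sub>1 \<noteq> 1\<close> \<open>z\<^sub>1 \<in> cball 0 1\<close> by simp
  qed
  with zero\<^sub>1 show False by simp
qed

lemma sum_twisted_coeffs_nonneg:
  assumes "\<bar>x\<bar> \<le> 1"
  shows "(\<Sum>n=1..N. a n * x ^ num_prime_factors_outside S n) \<ge> 0"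
proof -
  define f where
    "f \<sigma> = (\<Sum>n=1..N. a n * exp (- \<sigma> * ln (real n)) * x ^ num_prime_factors_outside S n)" for \<sigma>
  have H_f: "twisted_dirichlet_poly N a S (of_real \<sigma>) (of_real x) = of_real (f \<sigma>)" for \<sigma>
    unfolding f_def by (rule twisted_dirichlet_poly_of_real)
  obtain \<sigma>\<^sub>0 where "\<sigma>\<^sub>0 > 0" and
    near: "\<And>s z. Re s \<ge> \<sigma>\<^sub>0 \<Longrightarrow> norm z \<le> 1 \<Longrightarrow> norm (twisted_dirichlet_poly N a S s z - a 1) < a 1"
    using near_leading_coeff by blast
  have "norm (of_real (f \<sigma>\<^sub>0 - a 1) :: complex) < a 1"
    using near[of "of_real \<sigma>\<^sub>0" "of_real x"] assms(1) H_f by simp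
  then have "f \<sigma>\<^sub>0 > 0" by (simp only: norm_of_real)
  moreover have "f \<sigma> \<noteq> 0" if "\<sigma> > 0" for \<sigma>
    using twisted_dirichlet_poly_nonzero_on_disc[OF that, of "of_real x" S] assms(1) H_f
    by simp
  moreover have "continuous_on {0..\<sigma>\<^sub>0} f" unfolding f_def by (intro continuous_intros)
  ultimately have "f 0 \<ge> 0"
    using nonneg_if_no_zeros_between[of 0 \<sigma>\<^sub>0 f] \<open>\<sigma>\<^sub>0 > 0\<close> by auto
  then show ?thesis by (simp add: f_def)
qed

lemma sum_twisted_coeffs_pos:
  assumes "sum a {1..N} > 0" "\<bar>x\<bar> < 1"
  shows "(\<Sum>n=1..N. a n * x ^ num_prime_factors_outside S n) > 0"
proof -
  let ?H = "twisted_dirichlet_poly N a S"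
  define r where "r y = (\<Sum>n=1..N. a n * y ^ num_prime_factors_outside S n)" for y
  have H_0: "?H 0 (of_real y) = of_real (r y)" for y
    using twisted_dirichlet_poly_of_real[of N a S 0 y] by (simp add: r_def)
  have "r x \<noteq> 0"
  proof
    assume "r x = 0"
    moreover have "r 1 > 0" using assms(1) by (simp add: r_def)
    ultimately have "?H 0 1 \<noteq> ?H 0 (of_real x)"
      using H_0[of 1] H_0[of x] by simp
    then have "?H 0 (of_real x) \<noteq> 0"
    proof (rule twisted_dirichlet_poly_limit_nonzero
        [where ss = "\<lambda>m. of_real (inverse (Suc m))", rotated 2])
      show "(\<lambda>m. of_real (inverse (Suc m))) \<longlonglongrightarrow> (0 :: complex)"
        using tendsto_of_real[OF LIMSEQ_inverse_real_of_nat, where 'a = complex] by (simp only: of_real_0)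
      show "?H (of_real (inverse (Suc m))) w \<noteq> 0" if "norm w < 1" for m w
        using twisted_dirichlet_poly_nonzero_on_disc[of "inverse (Suc m)" w] that by simp
      show "norm (of_real x :: complex) < 1" using assms(2) by simp
    qed
    with \<open>r x = 0\<close> show False using H_0[of x] by simp
  qed
  then show ?thesis
    using sum_twisted_coeffs_nonneg[of x S] assms(2) by (simp add: r_def)
qed

end

theorem lemma6p2:
  fixes N :: nat and a :: "nat \<Rightarrow> real" and \<rho> :: "nat \<Rightarrow> real"
  assumes "N \<ge> 1"
    and "a 1 > 0"
    and "completely_multiplicative \<rho>"
    and "\<forall>n\<ge>1. \<rho> n * \<rho> n = \<rho> n"
    and "\<forall>s. Re s > 0 \<longrightarrow> dirichlet_poly N a s \<noteq> 0"
  shows "(\<Sum>n=1..N. a n * \<rho> n) \<ge> 0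
       \<and> Re (dirichlet_poly N a 0) \<ge> 0
       \<and> (Re (dirichlet_poly N a 0) > 0 \<longrightarrow> (\<Sum>n=1..N. a n * \<rho> n) > 0)"
proof -
  interpret zero_free_dirichlet_poly N a using assms(1,2,5) by unfold_locales
  define S where "S = {p. \<rho> p = 1}"
  have sum_\<rho>: "(\<Sum>n=1..N. a n * \<rho> n) = (\<Sum>n=1..N. a n * 0 ^ num_prime_factors_outside S n)"
    using idempotent_completely_multiplicative_eq_zero_power[OF assms(3,4)] unfolding S_def
    by (intro sum.cong refl) simp
  have P_0: "Re (dirichlet_poly N a 0) = sum a {1..N}"
    using twisted_dirichlet_poly_of_real[of N a S 0 1] by (simp add: twisted_dirichlet_poly_1)
  show ?thesis
    using sum_twisted_coeffs_nonneg[of 0 S] sum_twisted_coeffs_nonneg[of 1 S]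
      sum_twisted_coeffs_pos[of 0 S] sum_\<rho> P_0
    by simp
qed

end
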